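(* Define the $\mathbf Z$-linear map $\psi:MPR\to NSymm$ on permutation words by $\psi(\sigma)=0$ if $\sigma$ is not lsd and $\psi(\sigma)=R_{\mathrm{comp}(\mathrm{desc}(\sigma))}$ if $\sigma$ is lsd (with $\psi$ of the empty word equal to $1$). Then $\psi$ is a morphism of algebras $(MPR,m')\to NSymm$ and $\psi\circ i=\mathrm{id}_{NSymm}$, i.e. $\psi$ is an algebra retraction of the injective Hopf algebra morphism $i:NSymm\to(MPR,m',\mu')$.
   Context: A permutation word of length $n$ is a word $[s_1,\dots,s_n]$ over $\mathbf N$ in which each of $1,\dots,n$ occurs once; $S_n$ is the set of these; the empty word is the unique one of length $0$. $\mathrm{desc}(\sigma)=\{i\in\{1,\dots,n-1\}:s_i>s_{i+1}\}$. $\sigma\in S_n$ is lsd if it is the lexicographically smallest element of $\{\tau\in S_n:\mathrm{desc}(\tau)=\mathrm{desc}(\sigma)\}$. A composition of $n$ is a word $\alpha=[a_1,\dots,a_r]$ over $\mathbf N$ with sum $n$; $\mathrm{desc}(\alpha)=\{a_1,a_1+a_2,\dots,a_1+\dots+a_{r-1}\}\subset\{1,\dots,n-1\}$; for $D=\{d_1<\dots<d_{r-1}\}\subset\{1,\dots,n-1\}$, $\mathrm{comp}(D)=[d_1,d_2-d_1,\dots,n-d_{r-1}]$ (inverse to $\mathrm{desc}$). $(MPR,m',\mu')$: free abelian group on all permutation words, unit the empty word; for $\sigma\in S_m,\tau\in S_n$, $m'(\sigma\otimes\tau)=\sum u*v$ over all pairs of words $u,v$ over $\mathbf N$ with $\mathrm{supp}(u)\cup\mathrm{supp}(v)=\{1,\dots,m+n\}$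 (disjointly), $\mathrm{st}(u)=\sigma$, $\mathrm{st}(v)=\tau$, where $*$ is concatenation, $\mathrm{supp}$ the set of letters, and $\mathrm{st}$ relabels the letters of a repetition-free word by $1,\dots,\text{length}$ order-preservingly; $\mu'(\tau)=\sum_{i=0}^n\tau_{\{1,\dots,i\}}\otimes\mathrm{st}(\tau_{\{i+1,\dots,n\}})$, $\tau_I$ keeping only the letters in $I$. $NSymm=\mathbf Z\langle Z_1,Z_2,\dots\rangle$ with $\mu(Z_n)=\sum_{i+j=n}Z_i\otimes Z_j$ ($Z_0=1$); $S_0=1$ and $\sum_{i=0}^n(-1)^iS_{n-i}Z_i=0$ for $n\ge1$; $S_\beta=S_{b_1}\cdots S_{b_k}$; $\alpha\ge\beta$ means the composition $\alpha$ refines $\beta$ ($\beta$ obtained by adding consecutive blocks of entries of $\alpha$); $R_\alpha=\sum_{\beta\le\alpha}(-1)^{\mathrm{lg}(\alpha)-\mathrm{lg}(\beta)}S_\beta$. These form a basis with $R_{[a_1,\dots,a_m]}R_{[b_1,\dots,b_n]}=R_{[a_1,\dots,a_m,b_1,\dots,b_n]}+R_{[a_1,\dots,a_{m-1},a_m+b_1,b_2,\dots,b_n]}$. $i:NSymm\to(MPR,m',\mu')$ is the injective Hopf algebra morphism determined by $i(S_n)=[1,2,\dots,n]$; it satisfies $i(R_\alpha)=\sum_{\sigma\in S_n,\ \mathrm{desc}(\sigma)=\mathrm{desc}(\alpha)}\sigma$ for $\alpha$ a composition of $n$. *)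

theory Defs
  imports Main
begin

definition perm_word :: "nat list \<Rightarrow> bool" where
  "perm_word w \<longleftrightarrow> distinct w \<and> set w = {1..length w}"

text \<open>Standardization of a repetition-free word: relabel letters by 1..length,
order-preservingly.\<close>
definition st :: "nat list \<Rightarrow> nat list" where
  "st w = map (\<lambda>x. card {y \<in> set w. y \<le> x}) w"

text \<open>Descent set, positions 1-indexed: i in desc iff s_i > s_(i+1).\<close>
definition desc :: "nat list \<Rightarrow> nat set" where
  "desc w = {i. 1 \<le> i \<and> i < length w \<and> w ! (i - 1) > w ! i}"

definition lsd :: "nat list \<Rightarrow> bool" where
  "lsd \<sigma> \<longleftrightarrow> perm_word \<sigma> \<and>
     (\<forall>\<tau>. perm_word \<tau> \<and> length \<tau> = length \<sigma> \<and> desc \<tau> = desc \<sigma> \<longrightarrow>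
           \<sigma> = \<tau> \<or> (\<sigma>, \<tau>) \<in> lexord {(a, b). a < b})"

text \<open>comp(D) for D a subset of {1..n-1}: the composition [d1, d2-d1, ..., n-d_(r-1)].\<close>
definition comp :: "nat \<Rightarrow> nat set \<Rightarrow> nat list" where
  "comp n D = (let ds = sorted_list_of_set D in
                 map (\<lambda>(a, b). a - b) (zip (ds @ [n]) (0 # ds)))"

text \<open>An element of NSymm is a finitely supported function from words over the
positive naturals to Z; the word [n1,...,nk] stands for the monomial Z_n1 ... Z_nk.\<close>

definition NSym :: "(nat list \<Rightarrow> int) set" where
  "NSym = {f. finite {w. f w \<noteq> 0} \<and> (\<forall>w. f w \<noteq> 0 \<longrightarrow> 0 \<notin> set w)}"

definition ns_one :: "nat list \<Rightarrow> int" where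
  "ns_one = (\<lambda>w. if w = [] then 1 else 0)"

definition ns_mult :: "(nat list \<Rightarrow> int) \<Rightarrow> (nat list \<Rightarrow> int) \<Rightarrow> (nat list \<Rightarrow> int)" where
  "ns_mult f g = (\<lambda>w. \<Sum>k\<le>length w. f (take k w) * g (drop k w))"

definition Zg :: "nat \<Rightarrow> nat list \<Rightarrow> int" where
  "Zg n = (if n = 0 then ns_one else (\<lambda>w. if w = [n] then 1 else 0))"

function S :: "nat \<Rightarrow> nat list \<Rightarrow> int" where
  "S n = (if n = 0 then ns_one
          else (\<lambda>w. - (\<Sum>i\<in>{1..n}. (-1) ^ i * ns_mult (S (n - i)) (Zg i) w)))"
  by auto
termination
  by (relation "measure id") auto

definition S_comp :: "nat list \<Rightarrow> nat list \<Rightarrow> int" where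
  "S_comp \<beta> = foldr ns_mult (map S \<beta>) ns_one"

definition coarsenings :: "nat list \<Rightarrow> nat list set" where
  "coarsenings \<alpha> = {map sum_list ks | ks. concat ks = \<alpha> \<and> (\<forall>k\<in>set ks. k \<noteq> [])}"

definition R :: "nat list \<Rightarrow> nat list \<Rightarrow> int" where
  "R \<alpha> = (\<lambda>w. \<Sum>\<beta>\<in>coarsenings \<alpha>. (-1) ^ (length \<alpha> - length \<beta>) * S_comp \<beta> w)"

definition MPR :: "(nat list \<Rightarrow> int) set" where
  "MPR = {F. finite {w. F w \<noteq> 0} \<and> (\<forall>w. F w \<noteq> 0 \<longrightarrow> perm_word w)}"

definition mpr_one :: "nat list \<Rightarrow> int" where
  "mpr_one = (\<lambda>w. if w = [] then 1 else 0)"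

text \<open>Bilinear extension of m': the coefficient of a permutation word w in
m'(F, G) is the sum over all splittings w = u @ v of F(st u) * G(st v).\<close>
definition mpr_mult :: "(nat list \<Rightarrow> int) \<Rightarrow> (nat list \<Rightarrow> int) \<Rightarrow> (nat list \<Rightarrow> int)" where
  "mpr_mult F G = (\<lambda>w. if perm_word w
       then (\<Sum>k\<le>length w. F (st (take k w)) * G (st (drop k w))) else 0)"

definition mpr_basis :: "nat list \<Rightarrow> nat list \<Rightarrow> int" where
  "mpr_basis \<sigma> = (\<lambda>w. if w = \<sigma> then 1 else 0)"

definition psi_word :: "nat list \<Rightarrow> nat list \<Rightarrow> int" where
  "psi_word \<sigma> = (if \<sigma> = [] then ns_one
                  else if lsd \<sigma> then R (comp (length \<sigma>) (desc \<sigma>))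
                  else (\<lambda>w. 0))"

definition psi :: "(nat list \<Rightarrow> int) \<Rightarrow> (nat list \<Rightarrow> int)" where
  "psi F = (\<lambda>w. \<Sum>\<sigma>\<in>{\<sigma>. F \<sigma> \<noteq> 0}. F \<sigma> * psi_word \<sigma> w)"

end

(*
  An lsd permutation word is determined by its descent set: it is the unique permutation word in
  which every ascent separates smaller letters from larger ones, i.e. a concatenation of
  decreasing runs on consecutive intervals. This property passes to standardized prefixes and
  suffixes. Hence if s or t is not lsd, no term of m'(s, t) is lsd, while for lsd s and t of
  lengths m, n > 0 exactly two terms are lsd, namely those with descent sets
  D = desc s Un (m + desc t) and D Un {m}. Their compositions are the near-concatenation and the
  concatenation of comp (desc s) and comp (desc t), so the product rule for ribbon functions
  makes psi multiplicative. Finally, psi o i is a ring endomorphism of NSymm fixing every S n;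
  the recursion defining S n can be solved for Z n, so it fixes every Z n and is the identity.
*)
theory Submission
  imports Defs "HOL-Library.Function_Algebras"
begin

declare S.simps [simp del]

section \<open>The ring NSymm\<close>

lemma S_0 [simp]: "S 0 = ns_one"
  by (subst S.simps) simp

lemma ns_mult_assoc: "ns_mult (ns_mult f g) h = ns_mult f (ns_mult g h)"
proof
  fix w :: "nat list"
  define n where "n = length w"
  define G where "G = (\<lambda>j l. f (take j w) * g (take l (drop j w)) * h (drop (j + l) w))"
  have "ns_mult (ns_mult f g) h w = (\<Sum>k\<le>n. \<Sum>j\<le>k. G j (k - j))"
    unfolding ns_mult_def G_def n_def
    by (auto simp: sum_distrib_right min_def take_drop intro!: sum.cong)
  also have "\<dots> = (\<Sum>(j, l)\<in>{(j, l). j + l \<le> n}. G j l)"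
    by (rule sum.triangle_reindex_eq[symmetric])
  also have "\<dots> = (\<Sum>j\<le>n. \<Sum>l\<le>n - j. G j l)"
  proof -
    have "{(j, l). j + l \<le> n} = (SIGMA j:{..n}. {..n - j})"
      by auto
    then show ?thesis
      by (simp add: sum.Sigma)
  qed
  also have "\<dots> = ns_mult f (ns_mult g h) w"
    unfolding ns_mult_def G_def n_def
    by (auto simp: sum_distrib_left mult.assoc add.commute intro!: sum.cong)
  finally show "ns_mult (ns_mult f g) h w = ns_mult f (ns_mult g h) w" .
qed

lemma ns_mult_one_left [simp]: "ns_mult ns_one f = f"
proof
  fix w :: "nat list"
  have "ns_mult ns_one f w = (\<Sum>k\<in>{0}. ns_one (take k w) * f (drop k w))"
    unfolding ns_mult_def ns_one_def by (rule sum.mono_neutral_right) auto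
  then show "ns_mult ns_one f w = f w"
    by (simp add: ns_one_def)
qed

lemma ns_mult_one_right [simp]: "ns_mult f ns_one = f"
proof
  fix w :: "nat list"
  have "ns_mult f ns_one w = (\<Sum>k\<in>{length w}. f (take k w) * ns_one (drop k w))"
    unfolding ns_mult_def ns_one_def by (rule sum.mono_neutral_right) auto
  then show "ns_mult f ns_one w = f w"
    by (simp add: ns_one_def)
qed

lemma ns_mult_zero_left [simp]: "ns_mult (\<lambda>w. 0) h = (\<lambda>w. 0)"
  by (simp add: ns_mult_def)

lemma ns_mult_zero_right [simp]: "ns_mult h (\<lambda>w. 0) = (\<lambda>w. 0)"
  by (simp add: ns_mult_def)

lemma ns_mult_add_right: "ns_mult h (f + g) = ns_mult h f + ns_mult h g"
  by (auto simp: ns_mult_def fun_eq_iff distrib_left sum.distrib)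

lemma ns_mult_diff_left: "ns_mult (f - g) h = ns_mult f h - ns_mult g h"
  by (auto simp: ns_mult_def fun_eq_iff left_diff_distrib sum_subtractf)

lemma ns_mult_scale_left: "ns_mult (\<lambda>w. c * f w) h = (\<lambda>w. c * ns_mult f h w)"
  by (auto simp: ns_mult_def fun_eq_iff sum_distrib_left mult.assoc)

lemma ns_mult_scale_right: "ns_mult h (\<lambda>w. c * f w) = (\<lambda>w. c * ns_mult h f w)"
  by (auto simp: ns_mult_def fun_eq_iff sum_distrib_left mult.left_commute)

lemma ns_mult_sum_left: "ns_mult (\<lambda>w. \<Sum>a\<in>A. f a w) h = (\<lambda>w. \<Sum>a\<in>A. ns_mult (f a) h w)"
  by (auto simp: ns_mult_def fun_eq_iff sum_distrib_right intro: sum.swap)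

lemma ns_mult_sum_right: "ns_mult h (\<lambda>w. \<Sum>a\<in>A. f a w) = (\<lambda>w. \<Sum>a\<in>A. ns_mult h (f a) w)"
  by (auto simp: ns_mult_def fun_eq_iff sum_distrib_left intro: sum.swap)

lemma NSym_one [simp, intro]: "ns_one \<in> NSym"
proof -
  have "{w. ns_one w \<noteq> 0} \<subseteq> {[]}"
    by (auto simp: ns_one_def)
  then show ?thesis
    by (auto simp: NSym_def ns_one_def intro: finite_subset)
qed

lemma NSym_zero [simp, intro]: "(\<lambda>w. 0) \<in> NSym"
  by (simp add: NSym_def)

lemma NSym_add [intro]:
  assumes "f \<in> NSym" "g \<in> NSym"
  shows "(\<lambda>w. f w + g w) \<in> NSym"
proof -
  have "{w. f w + g w \<noteq> 0} \<subseteq> {w. f w \<noteq> 0} \<union> {w. g w \<noteq> 0}"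
    by auto
  with assms show ?thesis
    unfolding NSym_def by (auto intro: finite_subset)
qed

lemma NSym_scale [intro]: "f \<in> NSym \<Longrightarrow> (\<lambda>w. c * f w) \<in> NSym"
  unfolding NSym_def by (auto intro: finite_subset[of _ "{w. f w \<noteq> 0}"])

lemma NSym_sum [intro]: "(\<And>a. a \<in> A \<Longrightarrow> f a \<in> NSym) \<Longrightarrow> (\<lambda>w. \<Sum>a\<in>A. f a w) \<in> NSym"
proof (induction A rule: infinite_finite_induct)
  case (insert x F)
  then have "(\<lambda>w. f x w + (\<Sum>a\<in>F. f a w)) \<in> NSym"
    by (intro NSym_add) auto
  with insert show ?case
    by simp
qed (auto simp: NSym_def)

lemma ns_mult_nonzero_split:
  assumes "ns_mult f g w \<noteq> 0"
  obtains k where "f (take k w) \<noteq> 0" "g (drop k w) \<noteq> 0"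
proof -
  obtain k where "f (take k w) * g (drop k w) \<noteq> 0"
    using assms unfolding ns_mult_def by (auto elim: sum.not_neutral_contains_not_neutral)
  then show ?thesis
    using that by (metis mult_not_zero)
qed

lemma NSym_mult [intro]:
  assumes f: "f \<in> NSym" and g: "g \<in> NSym"
  shows "ns_mult f g \<in> NSym"
proof -
  let ?A = "{w. f w \<noteq> 0}" and ?B = "{w. g w \<noteq> 0}"
  have "{w. ns_mult f g w \<noteq> 0} \<subseteq> (\<lambda>(u, v). u @ v) ` (?A \<times> ?B)"
  proof
    fix w assume "w \<in> {w. ns_mult f g w \<noteq> 0}"
    then obtain k where "f (take k w) \<noteq> 0" "g (drop k w) \<noteq> 0"
      by (auto elim: ns_mult_nonzero_split)
    then show "w \<in> (\<lambda>(u, v). u @ v) ` (?A \<times> ?B)"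
      by (intro image_eqI[of _ _ "(take k w, drop k w)"]) auto
  qed
  moreover have "finite ((\<lambda>(u, v). u @ v) ` (?A \<times> ?B))"
    using f g by (auto simp: NSym_def)
  moreover have "0 \<notin> set w" if nonzero: "ns_mult f g w \<noteq> 0" for w
  proof -
    obtain k where "f (take k w) \<noteq> 0" "g (drop k w) \<noteq> 0"
      using nonzero by (rule ns_mult_nonzero_split)
    then have "0 \<notin> set (take k w) \<union> set (drop k w)"
      using f g by (auto simp: NSym_def)
    then show ?thesis
      by (metis append_take_drop_id set_append)
  qed
  ultimately show ?thesis
    unfolding NSym_def by (auto intro: finite_subset)
qed

lemma NSym_Zg [intro]: "Zg n \<in> NSym"
  using NSym_one unfolding Zg_def NSym_def by (auto intro: finite_subset[of _ "{[n]}"])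

lemma NSym_S [intro]: "S n \<in> NSym"
proof (induction n rule: less_induct)
  case (less n)
  show ?case
  proof (cases "n = 0")
    case False
    have "(\<lambda>w. (-1) * (\<Sum>i\<in>{1..n}. (-1) ^ i * ns_mult (S (n - i)) (Zg i) w)) \<in> NSym"
      using less False by (intro NSym_sum NSym_scale NSym_mult) auto
    with False show ?thesis
      by (subst S.simps) simp
  qed simp
qed

lemma NSym_S_comp [intro]: "S_comp \<beta> \<in> NSym"
  unfolding S_comp_def by (induction \<beta>) auto

lemma NSym_R [intro]: "R \<alpha> \<in> NSym"
  unfolding R_def by (intro NSym_sum NSym_scale) auto

lemma NSym_psi_word [intro]: "psi_word \<sigma> \<in> NSym"
  unfolding psi_word_def by auto

lemma NSym_psi [intro]: "psi F \<in> NSym"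
  unfolding psi_def by (intro NSym_sum NSym_scale) auto

section \<open>Products of ribbon functions\<close>

definition add_hd :: "nat \<Rightarrow> nat list \<Rightarrow> nat list" where
  "add_hd a l = (case l of [] \<Rightarrow> [] | c # cs \<Rightarrow> (a + c) # cs)"

lemma add_hd_Cons [simp]: "add_hd a (c # cs) = (a + c) # cs"
  by (simp add: add_hd_def)

lemma coarsenings_Nil [simp]: "coarsenings [] = {[]}"
  unfolding coarsenings_def by auto

lemma coarsenings_single [simp]: "coarsenings [a] = {[a]}"
proof -
  have "coarsenings [a] \<subseteq> {[a]}"
  proof
    fix \<beta> assume "\<beta> \<in> coarsenings [a]"
    then obtain ks where "\<beta> = map sum_list ks" "concat ks = [a]" "\<forall>k\<in>set ks. k \<noteq> []"
      unfolding coarsenings_def by blast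
    moreover from this have "ks = [[a]]"
      by (induction ks) (auto simp: append_eq_Cons_conv)
    ultimately show "\<beta> \<in> {[a]}"
      by simp
  qed
  moreover have "[a] \<in> coarsenings [a]"
    unfolding coarsenings_def by (auto intro!: exI[of _ "[[a]]"])
  ultimately show ?thesis
    by blast
qed

lemma coarsening_Cons_Cons_cases:
  assumes "\<beta> \<in> coarsenings (a # b # r)"
  obtains \<gamma> where "\<gamma> \<in> coarsenings (b # r)" "\<beta> = a # \<gamma>"
    | \<gamma> where "\<gamma> \<in> coarsenings (b # r)" "\<beta> = add_hd a \<gamma>"
proof -
  obtain ks where ks: "\<beta> = map sum_list ks" "concat ks = a # b # r" "\<forall>k\<in>set ks. k \<noteq> []"
    using assms unfolding coarsenings_def by auto
  then obtain k1 ks' where "ks = k1 # ks'"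
    by (cases ks) auto
  moreover from this obtain k where "k1 = a # k"
    using ks by (cases k1) auto
  ultimately have k: "ks = (a # k) # ks'"
    by simp
  show ?thesis
  proof (cases "k = []")
    case True
    then have "map sum_list ks' \<in> coarsenings (b # r)" "\<beta> = a # map sum_list ks'"
      using ks k unfolding coarsenings_def by auto
    then show ?thesis
      by (rule that(1))
  next
    case False
    then have "map sum_list (k # ks') \<in> coarsenings (b # r)" "\<beta> = add_hd a (map sum_list (k # ks'))"
      using ks k unfolding coarsenings_def by (auto intro!: exI[of _ "k # ks'"])
    then show ?thesis
      by (rule that(2))
  qed
qed

lemma coarsenings_Cons_Cons:
  "coarsenings (a # b # r) = Cons a ` coarsenings (b # r) \<union> add_hd a ` coarsenings (b # r)"
proof
  show "coarsenings (a # b # r) \<subseteq> Cons a ` coarsenings (b # r) \<union> add_hd a ` coarsenings (b # r)"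
    by (auto elim: coarsening_Cons_Cons_cases)
next
  show "Cons a ` coarsenings (b # r) \<union> add_hd a ` coarsenings (b # r) \<subseteq> coarsenings (a # b # r)"
  proof
    fix \<beta> assume "\<beta> \<in> Cons a ` coarsenings (b # r) \<union> add_hd a ` coarsenings (b # r)"
    then obtain ks where ks: "concat ks = b # r" "\<forall>k\<in>set ks. k \<noteq> []"
      and \<beta>: "\<beta> = a # map sum_list ks \<or> \<beta> = add_hd a (map sum_list ks)"
      unfolding coarsenings_def by auto
    then obtain k ks' where k: "ks = k # ks'"
      by (cases ks) auto
    from \<beta> show "\<beta> \<in> coarsenings (a # b # r)"
    proof
      assume "\<beta> = a # map sum_list ks"
      then show ?thesis
        using ks unfolding coarsenings_def by (auto intro!: exI[of _ "[a] # ks"])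
    next
      assume "\<beta> = add_hd a (map sum_list ks)"
      then show ?thesis
        using ks k unfolding coarsenings_def by (auto intro!: exI[of _ "(a # k) # ks'"])
    qed
  qed
qed

lemma finite_coarsenings [simp]: "finite (coarsenings \<alpha>)"
  by (induction \<alpha> rule: induct_list012) (simp_all add: coarsenings_Cons_Cons)

lemma coarsening_props:
  assumes "\<beta> \<in> coarsenings \<alpha>"
  shows length_coarsening_le: "length \<beta> \<le> length \<alpha>"
    and coarsening_nonempty: "\<alpha> \<noteq> [] \<Longrightarrow> \<beta> \<noteq> []"
    and coarsening_pos: "\<forall>x\<in>set \<alpha>. 0 < x \<Longrightarrow> \<forall>x\<in>set \<beta>. 0 < x"
proof -
  obtain ks where ks: "\<beta> = map sum_list ks" "concat ks = \<alpha>" "\<forall>k\<in>set ks. k \<noteq> []"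
    using assms unfolding coarsenings_def by auto
  have "length ks \<le> length (concat ks)"
    using ks(3) by (induction ks) (auto simp: Suc_le_eq simp flip: length_greater_0_conv)
  then show "length \<beta> \<le> length \<alpha>"
    using ks by simp
  show "\<alpha> \<noteq> [] \<Longrightarrow> \<beta> \<noteq> []"
    using ks by auto
  show "\<forall>x\<in>set \<beta>. 0 < x" if "\<forall>x\<in>set \<alpha>. 0 < x"
  proof
    fix x assume "x \<in> set \<beta>"
    then obtain k where k: "k \<in> set ks" "x = sum_list k"
      using ks by auto
    then obtain y where "y \<in> set k"
      using ks(3) by (metis last_in_set)
    then show "0 < x"
      using that ks k member_le_sum_list[of y k] by fastforce
  qed
qed

lemma coarsenings_add_hd: "coarsenings ((c + x) # r) = add_hd c ` coarsenings (x # r)"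
proof (induction r arbitrary: x)
  case (Cons y r)
  have "add_hd c ` add_hd x ` coarsenings (y # r) = add_hd (c + x) ` coarsenings (y # r)"
    unfolding image_image using coarsening_nonempty[of _ "y # r"]
    by (intro image_cong) (auto simp: add_hd_def split: list.splits)
  then show ?case
    by (simp add: coarsenings_Cons_Cons image_Un image_image)
qed simp

lemma S_comp_Cons: "S_comp (a # \<beta>) = ns_mult (S a) (S_comp \<beta>)"
  by (simp add: S_comp_def)

lemma R_single: "R [a] = S a"
  by (simp add: R_def S_comp_Cons S_comp_def)

lemma R_Cons_Cons:
  assumes pos: "\<forall>x\<in>set (a # b # r). 0 < x"
  shows "R (a # b # r) = ns_mult (S a) (R (b # r)) - R ((a + b) # r)"
proof
  fix w
  let ?C = "coarsenings (b # r)"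
  let ?f = "\<lambda>\<beta>. (-1::int) ^ (length (a # b # r) - length \<beta>) * S_comp \<beta> w"
  have nonempty: "\<beta> \<noteq> []" if "\<beta> \<in> ?C" for \<beta>
    using that by (rule coarsening_nonempty) simp
  have "Cons a ` ?C \<inter> add_hd a ` ?C = {}"
  proof -
    have "a # \<beta> \<noteq> add_hd a (c # cs)" if "c # cs \<in> ?C" for \<beta> c cs
      using coarsening_pos[OF that] pos by auto
    then show ?thesis
      using nonempty by (fastforce simp: neq_Nil_conv)
  qed
  moreover have inj: "inj_on (add_hd a) ?C"
    using nonempty unfolding inj_on_def add_hd_def by (auto split: list.splits)
  ultimately have "R (a # b # r) w = (\<Sum>\<beta>\<in>?C. ?f (a # \<beta>)) + (\<Sum>\<beta>\<in>?C. ?f (add_hd a \<beta>))"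
    unfolding R_def coarsenings_Cons_Cons
    by (simp add: sum.union_disjoint sum.reindex)
  also have "(\<Sum>\<beta>\<in>?C. ?f (a # \<beta>)) = ns_mult (S a) (R (b # r)) w"
    unfolding R_def ns_mult_sum_right ns_mult_scale_right by (simp add: S_comp_Cons)
  also have "(\<Sum>\<beta>\<in>?C. ?f (add_hd a \<beta>)) = - R ((a + b) # r) w"
  proof -
    have "?f (add_hd a \<beta>)
        = - ((-1) ^ (length ((a + b) # r) - length (add_hd a \<beta>)) * S_comp (add_hd a \<beta>) w)"
      if "\<beta> \<in> ?C" for \<beta>
      using nonempty[OF that] length_coarsening_le[OF that]
      by (auto simp: neq_Nil_conv Suc_diff_le)
    then show ?thesis
      unfolding R_def coarsenings_add_hd
      by (simp add: sum.reindex[OF inj] sum_negf[symmetric])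
  qed
  finally show "R (a # b # r) w = (ns_mult (S a) (R (b # r)) - R ((a + b) # r)) w"
    by simp
qed

definition near_concat :: "nat list \<Rightarrow> nat list \<Rightarrow> nat list" where
  "near_concat \<alpha> \<beta> = butlast \<alpha> @ [last \<alpha> + hd \<beta>] @ tl \<beta>"

lemma near_concat_Cons_Cons: "near_concat (a # x # r) \<beta> = a # near_concat (x # r) \<beta>"
  by (simp add: near_concat_def)

lemma near_concat_add_hd: "near_concat ((a + x) # r) \<beta> = add_hd a (near_concat (x # r) \<beta>)"
  by (cases r rule: rev_cases) (auto simp: near_concat_def)

lemma R_mult:
  assumes "\<alpha> \<noteq> []" "\<beta> \<noteq> []" "\<forall>x\<in>set \<alpha>. 0 < x" "\<forall>x\<in>set \<beta>. 0 < x"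
  shows "ns_mult (R \<alpha>) (R \<beta>) = R (\<alpha> @ \<beta>) + R (near_concat \<alpha> \<beta>)"
  using assms
proof (induction "length \<alpha>" arbitrary: \<alpha> rule: less_induct)
  case less
  obtain b r where \<beta>: "\<beta> = b # r"
    using less.prems by (cases \<beta>) auto
  obtain a \<alpha>' where \<alpha>: "\<alpha> = a # \<alpha>'"
    using less.prems by (cases \<alpha>) auto
  show ?case
  proof (cases \<alpha>')
    case Nil
    then show ?thesis
      using \<alpha> \<beta> less.prems by (simp add: R_single R_Cons_Cons near_concat_def)
  next
    case (Cons x r')
    let ?\<gamma> = "near_concat (x # r') \<beta>"
    have pos_\<gamma>: "\<forall>y\<in>set ?\<gamma>. 0 < y"
      using less.prems \<alpha> Cons \<beta> by (cases r' rule: rev_cases) (auto simp: near_concat_def)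
    obtain c cs where \<gamma>: "?\<gamma> = c # cs"
      by (cases ?\<gamma>) (auto simp: near_concat_def)
    have IH: "ns_mult (R (x # r')) (R \<beta>) = R ((x # r') @ \<beta>) + R ?\<gamma>"
      "ns_mult (R ((a + x) # r')) (R \<beta>) = R (((a + x) # r') @ \<beta>) + R (near_concat ((a + x) # r') \<beta>)"
      using less.prems \<alpha> Cons by (intro less.hyps; simp)+
    have "ns_mult (R \<alpha>) (R \<beta>) = ns_mult (ns_mult (S a) (R (x # r')) - R ((a + x) # r')) (R \<beta>)"
      using less.prems \<alpha> Cons by (simp add: R_Cons_Cons)
    also have "\<dots> = ns_mult (S a) (ns_mult (R (x # r')) (R \<beta>)) - ns_mult (R ((a + x) # r')) (R \<beta>)"
      by (simp add: ns_mult_diff_left ns_mult_assoc)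
    also have "\<dots> = (ns_mult (S a) (R ((x # r') @ \<beta>)) - R (((a + x) # r') @ \<beta>))
        + (ns_mult (S a) (R ?\<gamma>) - R (near_concat ((a + x) # r') \<beta>))"
      unfolding IH ns_mult_add_right by (simp add: algebra_simps)
    also have "\<dots> = R (\<alpha> @ \<beta>) + R (near_concat \<alpha> \<beta>)"
      using R_Cons_Cons[of a c cs] R_Cons_Cons[of a x "r' @ \<beta>"] less.prems \<alpha> Cons \<gamma> pos_\<gamma>
      by (simp add: near_concat_Cons_Cons near_concat_add_hd ball_Un)
    finally show ?thesis .
  qed
qed

section \<open>Standardization, descents and lsd permutation words\<close>

lemma length_st [simp]: "length (st w) = length w"
  by (simp add: st_def)

lemma st_Nil [simp]: "st [] = []"
  by (simp add: st_def)

lemma strict_mono_on_rank: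
  fixes w :: "'a :: linorder list"
  shows "strict_mono_on (set w) (\<lambda>x. card {y \<in> set w. y \<le> x})"
proof (rule strict_mono_onI)
  fix x y assume "x \<in> set w" "y \<in> set w" "x < y"
  then have "{z \<in> set w. z \<le> x} \<subseteq> {z \<in> set w. z \<le> y}"
    and "y \<in> {z \<in> set w. z \<le> y} - {z \<in> set w. z \<le> x}"
    by auto
  then have "{z \<in> set w. z \<le> x} \<subset> {z \<in> set w. z \<le> y}"
    by blast
  then show "card {z \<in> set w. z \<le> x} < card {z \<in> set w. z \<le> y}"
    by (simp add: psubset_card_mono)
qed

lemma desc_map_strict_mono: "strict_mono_on (set w) f \<Longrightarrow> desc (map f w) = desc w"
  unfolding desc_def by (auto simp: strict_mono_on_less)

lemma desc_st: "desc (st w) = desc w"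
  unfolding st_def by (rule desc_map_strict_mono[OF strict_mono_on_rank])

lemma perm_word_st:
  assumes "distinct w"
  shows "perm_word (st w)"
proof -
  have dist: "distinct (st w)"
    using assms strict_mono_on_imp_inj_on[OF strict_mono_on_rank] by (simp add: st_def distinct_map)
  have "set (st w) \<subseteq> {1..length w}"
  proof
    fix r assume "r \<in> set (st w)"
    then obtain x where x: "x \<in> set w" "r = card {y \<in> set w. y \<le> x}"
      by (auto simp: st_def)
    then have "0 < r"
      by (auto simp: card_gt_0_iff)
    moreover have "r \<le> card (set w)"
      using x by (auto intro: card_mono)
    ultimately show "r \<in> {1..length w}"
      using assms by (simp add: distinct_card)
  qed
  moreover have "card (set (st w)) = length w"
    using dist by (simp add: distinct_card)
  ultimately have "set (st w) = {1..length w}"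
    by (intro card_subset_eq) auto
  with dist show ?thesis
    by (simp add: perm_word_def)
qed

lemma st_perm_word:
  assumes "perm_word w"
  shows "st w = w"
proof -
  have "{y \<in> set w. y \<le> x} = {1..x}" if "x \<in> set w" for x
    using assms that by (auto simp: perm_word_def)
  then show ?thesis
    by (simp add: st_def map_idI)
qed

lemma desc_subset: "desc w \<subseteq> {1..<length w}"
  unfolding desc_def by auto

lemma desc_take: "desc (take m w) = {i \<in> desc w. i < m}"
  unfolding desc_def by auto

lemma desc_drop: "desc (drop m w) = {i. 1 \<le> i \<and> i + m \<in> desc w}"
proof -
  have "m + (i - 1) = i + m - 1" if "1 \<le> i" for i
    using that by simp
  then show ?thesis
    unfolding desc_def by (auto simp: add.commute)
qed

lemma desc_sorted:
  assumes "sorted_wrt (<) w"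
  shows "desc w = {}"
proof (rule equals0I)
  fix i assume "i \<in> desc w"
  then have "1 \<le> i" "i < length w" "w ! i < w ! (i - 1)"
    by (auto simp: desc_def)
  moreover have "w ! (i - 1) < w ! i"
    using sorted_wrt_nth_less[OF assms, of "i - 1" i] calculation by simp
  ultimately show False
    by simp
qed

definition ascent_separated :: "nat list \<Rightarrow> bool" where
  "ascent_separated w \<longleftrightarrow> (\<forall>i. 0 < i \<and> i < length w \<and> w ! (i - 1) < w ! i \<longrightarrow>
      (\<forall>x\<in>set (take i w). \<forall>y\<in>set (drop i w). x < y))"

text \<open>Equivalently, the word is a concatenation of decreasing runs whose letter sets are
  consecutive intervals in increasing order; these are exactly the lsd permutation words.\<close>

lemma ascent_separatedD:
  "ascent_separated w \<Longrightarrow> 0 < i \<Longrightarrow> i < length w \<Longrightarrow> w ! (i - 1) < w ! i \<Longrightarrow>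
    x \<in> set (take i w) \<Longrightarrow> y \<in> set (drop i w) \<Longrightarrow> x < y"
  unfolding ascent_separated_def by blast

lemma ascent_separated_map_strict_mono:
  assumes "strict_mono_on (set w) f"
  shows "ascent_separated (map f w) \<longleftrightarrow> ascent_separated w"
proof -
  have less: "f x < f y \<longleftrightarrow> x < y" if "x \<in> set w" "y \<in> set w" for x y
    using strict_mono_on_less[OF assms that] .
  have split: "(\<forall>x\<in>set (take i w). \<forall>y\<in>set (drop i w). f x < f y) \<longleftrightarrow>
      (\<forall>x\<in>set (take i w). \<forall>y\<in>set (drop i w). x < y)" for i
    by (intro ball_cong refl less) (auto dest: in_set_takeD in_set_dropD)
  have ascent: "map f w ! (i - 1) < map f w ! i \<longleftrightarrow> w ! (i - 1) < w ! i"
    if "0 < i" "i < length w" for i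
    using that less[of "w ! (i - 1)" "w ! i"] by simp
  have "(0 < i \<and> i < length w \<and> map f w ! (i - 1) < map f w ! i \<longrightarrow>
        (\<forall>x\<in>set (take i (map f w)). \<forall>y\<in>set (drop i (map f w)). x < y)) \<longleftrightarrow>
      (0 < i \<and> i < length w \<and> w ! (i - 1) < w ! i \<longrightarrow>
        (\<forall>x\<in>set (take i w). \<forall>y\<in>set (drop i w). x < y))" for i
    using ascent[of i] split[of i] by (auto simp: take_map drop_map)
  then show ?thesis
    by (simp only: ascent_separated_def length_map)
qed

lemma ascent_separated_st: "ascent_separated (st w) \<longleftrightarrow> ascent_separated w"
  unfolding st_def by (rule ascent_separated_map_strict_mono[OF strict_mono_on_rank])

lemma ascent_separated_take:
  assumes "ascent_separated w"
  shows "ascent_separated (take m w)"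
  unfolding ascent_separated_def
proof (intro allI impI ballI)
  fix i x y
  assume i: "0 < i \<and> i < length (take m w) \<and> take m w ! (i - 1) < take m w ! i"
    and x: "x \<in> set (take i (take m w))" and y: "y \<in> set (drop i (take m w))"
  have "i < m"
    using i by auto
  then have x': "x \<in> set (take i w)"
    using x by (simp add: min_absorb1)
  have y': "y \<in> set (drop i w)"
    using y by (auto simp: drop_take dest: in_set_takeD)
  have "0 < i" "i < length w" "w ! (i - 1) < w ! i"
    using i \<open>i < m\<close> by auto
  then show "x < y"
    using x' y' by (rule ascent_separatedD[OF assms])
qed

lemma ascent_separated_drop:
  assumes "ascent_separated w"
  shows "ascent_separated (drop m w)"
  unfolding ascent_separated_def
proof (intro allI impI ballI)
  fix i x y
  assume i: "0 < i \<and> i < length (drop m w) \<and> drop m w ! (i - 1) < drop m w ! i"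
    and x: "x \<in> set (take i (drop m w))" and y: "y \<in> set (drop i (drop m w))"
  have x': "x \<in> set (take (m + i) w)"
    using x by (auto simp: take_drop add.commute dest: in_set_dropD)
  have y': "y \<in> set (drop (m + i) w)"
    using y by (simp add: add.commute)
  obtain k where k: "i = Suc k"
    using i by (cases i) auto
  have "0 < m + i" "m + i < length w" "w ! (m + i - 1) < w ! (m + i)"
    using i k by auto
  then show "x < y"
    using x' y' by (rule ascent_separatedD[OF assms])
qed

lemma sorted_ascent_separated:
  assumes "sorted_wrt (<) w"
  shows "ascent_separated w"
  unfolding ascent_separated_def
proof (intro allI impI ballI)
  fix i x y
  assume "x \<in> set (take i w)" "y \<in> set (drop i w)"
  moreover have "sorted_wrt (<) (take i w @ drop i w)"
    using assms by simp
  ultimately show "x < y"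
    by (simp only: sorted_wrt_append)
qed

lemma first_difference:
  fixes p t :: "'a :: linorder list"
  assumes len: "length p = length t" and "p \<noteq> t"
  obtains j where "j < length p" "take j p = take j t" "p ! j \<noteq> t ! j"
proof -
  have "\<forall>a b :: 'a. (a, b) \<in> {(a, b). a < b} \<or> a = b \<or> (b, a) \<in> {(a, b). a < b}"
    by (simp add: less_linear)
  then have "(p, t) \<in> lexord {(a, b). a < b} \<or> (t, p) \<in> lexord {(a, b). a < b}"
    using lexord_linear[of _ p t] \<open>p \<noteq> t\<close> by simp
  then obtain j where "j < length p" "take j p = take j t" "p ! j < t ! j \<or> t ! j < p ! j"
    using len unfolding lexord_take_index_conv by auto
  then show ?thesis
    using that by fastforce
qed

lemma first_stop_index:
  assumes "j < n"
  obtains e where "j \<le> e" "e < n" "Suc e = n \<or> P e" "\<And>l. j \<le> l \<Longrightarrow> l < e \<Longrightarrow> \<not> P l"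
proof -
  define e where "e = (LEAST k. j \<le> k \<and> (Suc k = n \<or> P k))"
  have "\<exists>k. j \<le> k \<and> (Suc k = n \<or> P k)"
    using assms by (intro exI[of _ "n - 1"]) auto
  then have e: "j \<le> e" "Suc e = n \<or> P e"
    unfolding e_def by (metis (mono_tags, lifting) LeastI_ex)+
  have before: "\<not> (Suc l = n \<or> P l)" if "j \<le> l" "l < e" for l
    using not_less_Least[of l] that unfolding e_def by blast
  have "e < n"
  proof (rule ccontr)
    assume "\<not> e < n"
    then have "Suc (n - 1) = n" "j \<le> n - 1" "n - 1 < e"
      using assms by auto
    then show False
      using before[of "n - 1"] by blast
  qed
  with e before show ?thesis
    using that by blast
qed

lemma decreasing_run_card_le:
  fixes t :: "'a :: linorder list"
  assumes "j \<le> e" "e < length t" and decr: "\<And>l. j \<le> l \<Longrightarrow> l < e \<Longrightarrow> t ! Suc l < t ! l"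
  shows "Suc e - j \<le> card {x \<in> set (drop j t). x \<le> t ! j}"
proof -
  have less: "j \<le> l \<longrightarrow> l' \<le> e \<longrightarrow> t ! l' < t ! l" if "l < l'" for l l'
    using that by (induction rule: less_Suc_induct) (auto intro: decr order.strict_trans)
  have "inj_on ((!) t) {j..e}"
    by (intro inj_onI, rule ccontr, auto dest: less simp: neq_iff)
  moreover have "(!) t ` {j..e} \<subseteq> {x \<in> set (drop j t). x \<le> t ! j}"
  proof
    fix x assume "x \<in> (!) t ` {j..e}"
    then obtain l where l: "j \<le> l" "l \<le> e" "x = t ! l"
      by auto
    then have "x \<in> set (drop j t)"
      using assms(2) by (auto simp: in_set_conv_nth intro!: exI[of _ "l - j"])
    moreover have "x \<le> t ! j"
      using l less[of j l] by (cases "j = l") auto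
    ultimately show "x \<in> {x \<in> set (drop j t). x \<le> t ! j}"
      by simp
  qed
  ultimately have "card {j..e} \<le> card {x \<in> set (drop j t). x \<le> t ! j}"
    by (rule card_inj_on_le) simp
  then show ?thesis
    by simp
qed

lemma ascent_separated_card_le:
  assumes sep: "ascent_separated p" and "j \<le> e" "e < length p"
    and stop: "Suc e = length p \<or> p ! e < p ! Suc e"
  shows "card {x \<in> set (drop j p). x \<le> p ! j} \<le> Suc e - j"
proof -
  have "{x \<in> set (drop j p). x \<le> p ! j} \<subseteq> (!) p ` {j..e}"
  proof
    fix x assume x: "x \<in> {x \<in> set (drop j p). x \<le> p ! j}"
    then obtain i where i: "i < length (drop j p)" "x = drop j p ! i"
      by (auto simp: in_set_conv_nth)
    define l where "l = j + i"
    then have l: "j \<le> l" "l < length p" "x = p ! l"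
      using i by auto
    have "l \<le> e"
    proof (rule ccontr)
      assume "\<not> l \<le> e"
      then have "0 < Suc e" "Suc e < length p" "p ! (Suc e - 1) < p ! Suc e"
        using l stop by auto
      moreover have "p ! j \<in> set (take (Suc e) p)"
        using \<open>j \<le> e\<close> \<open>Suc e < length p\<close> by (auto simp: in_set_conv_nth intro!: exI[of _ j])
      moreover have "p ! l \<in> set (drop (Suc e) p)"
        using l \<open>\<not> l \<le> e\<close> by (auto simp: in_set_conv_nth intro!: exI[of _ "l - Suc e"])
      ultimately have "p ! j < p ! l"
        by (rule ascent_separatedD[OF sep])
      then show False
        using x l by simp
    qed
    then show "x \<in> (!) p ` {j..e}"
      using l by auto
  qed
  then have "card {x \<in> set (drop j p). x \<le> p ! j} \<le> card ((!) p ` {j..e})"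
    by (intro card_mono) auto
  also have "\<dots> \<le> card {j..e}"
    by (rule card_image_le) simp
  finally show ?thesis
    by simp
qed

lemma set_drop_eq_diff_take:
  assumes "distinct xs"
  shows "set (drop j xs) = set xs - set (take j xs)"
proof -
  have "set (take j xs) \<inter> set (drop j xs) = {}"
    using assms distinct_append[of "take j xs" "drop j xs"] by simp
  moreover have "set xs = set (take j xs) \<union> set (drop j xs)"
    by (metis append_take_drop_id set_append)
  ultimately show ?thesis
    by blast
qed

text \<open>If the words first differ at position j, the letters of the decreasing run of p starting
  at j are the smallest letters available from position j on, while t also decreases on that
  run, so its letter at j cannot be smaller.\<close>

lemma ascent_separated_lex_least:
  assumes p: "perm_word p" and t: "perm_word t" and len: "length t = length p"
    and desc_eq: "desc t = desc p" and sep: "ascent_separated p" and "p \<noteq> t"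
  shows "(p, t) \<in> lexord {(a, b). a < b}"
proof -
  obtain j where j: "j < length p" "take j p = take j t" "p ! j \<noteq> t ! j"
    by (rule first_difference[OF len[symmetric] \<open>p \<noteq> t\<close>])
  obtain e where e: "j \<le> e" "e < length p" "Suc e = length p \<or> p ! e < p ! Suc e"
    and in_run: "\<And>l. j \<le> l \<Longrightarrow> l < e \<Longrightarrow> \<not> p ! l < p ! Suc l"
    using first_stop_index[OF j(1), where P = "\<lambda>l. p ! l < p ! Suc l"] by blast
  have run: "p ! Suc l < p ! l \<and> t ! Suc l < t ! l" if "j \<le> l" "l < e" for l
  proof -
    have "Suc l < length p"
      using that e by simp
    moreover have "p ! l \<noteq> p ! Suc l"
      using p calculation by (simp add: perm_word_def nth_eq_iff_index_eq)
    ultimately have p_desc: "p ! Suc l < p ! l"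
      using in_run[OF that] by simp
    then have "Suc l \<in> desc t"
      using desc_eq \<open>Suc l < length p\<close> by (simp add: desc_def)
    then show ?thesis
      using p_desc by (simp add: desc_def)
  qed
  have U: "set (drop j t) = set (drop j p)"
    using p t len j(2) by (simp add: perm_word_def set_drop_eq_diff_take)
  have "Suc e - j \<le> card {x \<in> set (drop j p). x \<le> t ! j}"
    using decreasing_run_card_le[of j e t] run e len U by simp
  moreover have "card {x \<in> set (drop j p). x \<le> p ! j} \<le> Suc e - j"
    by (rule ascent_separated_card_le[OF sep e])
  moreover have "p ! j \<in> set (drop j p)" "t ! j \<in> set (drop j t)"
    using j(1) len by (metis Cons_nth_drop_Suc list.set_intros(1))+
  ultimately have "\<not> t ! j < p ! j"
    using strict_mono_on_less[OF strict_mono_on_rank[of "drop j p"]] U by fastforce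
  with j len show ?thesis
    unfolding lexord_take_index_conv by auto
qed

lemma ascent_separated_imp_lsd: "perm_word p \<Longrightarrow> ascent_separated p \<Longrightarrow> lsd p"
  unfolding lsd_def using ascent_separated_lex_least by blast

lemma lsd_unique:
  assumes "lsd p" "lsd q" "length p = length q" "desc p = desc q"
  shows "p = q"
proof (rule ccontr)
  assume "p \<noteq> q"
  with assms have "(p, q) \<in> lexord {(a, b). a < b}" "(q, p) \<in> lexord {(a, b). a < b}"
    unfolding lsd_def by metis+
  moreover have "asym {(a, b :: nat). a < b}"
    by (rule asymI) auto
  ultimately show False
    using lexord_asymmetric by blast
qed

definition ascents_upto :: "nat set \<Rightarrow> nat \<Rightarrow> nat" where
  "ascents_upto D k = card {i \<in> {1..k}. i \<notin> D}"

text \<open>Position k of the canonical word is keyed by the number of ascents up to k and then by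
  N - k, so that letters increase from one run to the next and decrease within a run.\<close>

definition lsd_key :: "nat \<Rightarrow> nat set \<Rightarrow> nat \<Rightarrow> nat" where
  "lsd_key N D k = ascents_upto D k * (N + 1) + (N - k)"

definition lsd_perm :: "nat \<Rightarrow> nat set \<Rightarrow> nat list" where
  "lsd_perm N D = st (map (lsd_key N D) [0..<N])"

lemma ascents_upto_mono: "k \<le> k' \<Longrightarrow> ascents_upto D k \<le> ascents_upto D k'"
  unfolding ascents_upto_def by (intro card_mono) auto

lemma ascents_upto_Suc: "ascents_upto D (Suc k) = ascents_upto D k + (if Suc k \<in> D then 0 else 1)"
proof -
  have "{i \<in> {1..Suc k}. i \<notin> D} = {i \<in> {1..k}. i \<notin> D} \<union> (if Suc k \<in> D then {} else {Suc k})"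
    by (auto simp: le_Suc_eq)
  then show ?thesis
    unfolding ascents_upto_def by (auto simp: card_insert_if)
qed

lemma lsd_key_less:
  assumes "ascents_upto D k < ascents_upto D k'"
  shows "lsd_key N D k < lsd_key N D k'"
proof -
  have "lsd_key N D k < (ascents_upto D k + 1) * (N + 1)"
    unfolding lsd_key_def by simp
  also have "\<dots> \<le> ascents_upto D k' * (N + 1)"
    using assms by (intro mult_right_mono) auto
  also have "\<dots> \<le> lsd_key N D k'"
    unfolding lsd_key_def by simp
  finally show ?thesis .
qed

lemma lsd_key_Suc_less_iff:
  assumes "k < N"
  shows "lsd_key N D (Suc k) < lsd_key N D k \<longleftrightarrow> Suc k \<in> D"
proof (cases "Suc k \<in> D")
  case True
  then show ?thesis
    using assms by (simp add: lsd_key_def ascents_upto_Suc)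
next
  case False
  then have "lsd_key N D k < lsd_key N D (Suc k)"
    by (intro lsd_key_less) (simp add: ascents_upto_Suc)
  with False show ?thesis
    by simp
qed

lemma inj_on_lsd_key: "inj_on (lsd_key N D) {..N}"
proof (rule inj_onI)
  fix k k' assume "k \<in> {..N}" "k' \<in> {..N}" "lsd_key N D k = lsd_key N D k'"
  moreover have "lsd_key N D i mod (N + 1) = N - i" for i
    unfolding lsd_key_def mod_mult_self3 by simp
  ultimately show "k = k'"
    by (metis atMost_iff diff_diff_cancel)
qed

lemma perm_word_lsd_perm: "perm_word (lsd_perm N D)"
  unfolding lsd_perm_def
  by (rule perm_word_st) (auto simp: distinct_map intro: inj_on_subset[OF inj_on_lsd_key])

lemma length_lsd_perm [simp]: "length (lsd_perm N D) = N"
  by (simp add: lsd_perm_def)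

lemma desc_lsd_perm:
  assumes "D \<subseteq> {1..<N}"
  shows "desc (lsd_perm N D) = D"
proof -
  have "i \<in> desc (map (lsd_key N D) [0..<N]) \<longleftrightarrow> i \<in> D" for i
  proof (cases "1 \<le> i \<and> i < N")
    case True
    then obtain k where "i = Suc k"
      by (cases i) auto
    with True show ?thesis
      using lsd_key_Suc_less_iff[of k N D] by (simp add: desc_def del: upt_Suc)
  qed (use assms in \<open>auto simp: desc_def\<close>)
  then show ?thesis
    unfolding lsd_perm_def desc_st by blast
qed

lemma ascent_separated_lsd_perm: "ascent_separated (lsd_perm N D)"
  unfolding lsd_perm_def ascent_separated_st unfolding ascent_separated_def
proof (intro allI impI ballI)
  let ?w = "map (lsd_key N D) [0..<N]"
  fix i x y
  assume i: "0 < i \<and> i < length ?w \<and> ?w ! (i - 1) < ?w ! i"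
    and x: "x \<in> set (take i ?w)" and y: "y \<in> set (drop i ?w)"
  obtain q where "q < length (take i ?w)" "x = take i ?w ! q"
    using x by (auto simp: in_set_conv_nth)
  then have k: "q < i" "x = lsd_key N D q"
    by (simp_all del: upt_Suc)
  obtain q' where "q' < length (drop i ?w)" "y = drop i ?w ! q'"
    using y by (auto simp: in_set_conv_nth)
  then have k': "i \<le> i + q'" "y = lsd_key N D (i + q')"
    by (simp_all del: upt_Suc)
  obtain l where l: "i = Suc l"
    using i by (cases i) auto
  then have "Suc l \<notin> D"
    using i lsd_key_Suc_less_iff[of l N D] by (auto simp del: upt_Suc)
  then have "ascents_upto D q < ascents_upto D (i + q')"
    using ascents_upto_mono[of q l D] ascents_upto_mono[of "Suc l" "i + q'" D] k k' l
    by (simp add: ascents_upto_Suc)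
  then have "lsd_key N D q < lsd_key N D (i + q')"
    by (rule lsd_key_less)
  then show "x < y"
    using k k' by simp
qed

lemma lsd_lsd_perm: "lsd (lsd_perm N D)"
  by (rule ascent_separated_imp_lsd[OF perm_word_lsd_perm ascent_separated_lsd_perm])

lemma lsd_eq_lsd_perm: "lsd p \<Longrightarrow> p = lsd_perm (length p) (desc p)"
  by (rule lsd_unique[OF _ lsd_lsd_perm]) (simp_all add: desc_lsd_perm[OF desc_subset])

lemma lsd_iff_ascent_separated: "lsd p \<longleftrightarrow> perm_word p \<and> ascent_separated p"
  by (metis ascent_separated_imp_lsd ascent_separated_lsd_perm lsd_def lsd_eq_lsd_perm)

section \<open>Compositions of descent sets\<close>

fun gaps :: "nat \<Rightarrow> nat list \<Rightarrow> nat \<Rightarrow> nat list" where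
  "gaps p [] n = [n - p]"
| "gaps p (d # ds) n = (d - p) # gaps d ds n"

lemma comp_eq_gaps: "comp n D = gaps 0 (sorted_list_of_set D) n"
proof -
  have "map (\<lambda>(a, b). a - b) (zip (ds @ [n]) (p # ds)) = gaps p ds n" for p ds
    by (induction ds arbitrary: p) auto
  then show ?thesis
    unfolding comp_def Let_def .
qed

lemma gaps_nonempty: "gaps p ds n \<noteq> []"
  by (cases ds) auto

lemma gaps_append: "gaps p (ds1 @ m # ds2) n = gaps p ds1 m @ gaps m ds2 n"
  by (induction ds1 arbitrary: p) auto

lemma gaps_shift: "gaps (p + m) (map (\<lambda>x. x + m) ds) (n + m) = gaps p ds n"
  by (induction ds arbitrary: p) auto

lemma gaps_append_near_concat:
  "p \<le> m \<Longrightarrow> m \<le> n \<Longrightarrow> \<forall>x\<in>set ds1. x \<le> m \<Longrightarrow> \<forall>x\<in>set ds2. m \<le> x \<Longrightarrow>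
    gaps p (ds1 @ ds2) n = near_concat (gaps p ds1 m) (gaps m ds2 n)"
proof (induction ds1 arbitrary: p)
  case Nil
  then show ?case
    by (cases ds2) (auto simp: near_concat_def)
next
  case (Cons d ds)
  obtain c cs where "gaps d ds m = c # cs"
    using gaps_nonempty by (metis list.exhaust)
  with Cons show ?case
    by (simp add: near_concat_def)
qed

lemma gaps_pos:
  "sorted_wrt (<) (p # ds) \<Longrightarrow> \<forall>x\<in>set ds. x < n \<Longrightarrow> p < n \<Longrightarrow> \<forall>x\<in>set (gaps p ds n). 0 < x"
  by (induction ds arbitrary: p) auto

lemma comp_nonempty: "comp n D \<noteq> []"
  unfolding comp_eq_gaps by (rule gaps_nonempty)

lemma comp_pos:
  assumes "D \<subseteq> {1..<n}" "0 < n"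
  shows "\<forall>x\<in>set (comp n D). 0 < x"
proof -
  have "finite D"
    using assms finite_subset by blast
  with assms show ?thesis
    unfolding comp_eq_gaps by (intro gaps_pos) auto
qed

lemma sorted_list_of_set_append:
  assumes "finite A" "finite B" "\<forall>a\<in>A. \<forall>b\<in>B. a < b"
  shows "sorted_list_of_set (A \<union> B) = sorted_list_of_set A @ sorted_list_of_set B"
  using assms by (intro strict_sorted_equal) (auto simp: sorted_wrt_append)

lemma sorted_list_of_set_image_add:
  fixes D :: "nat set"
  assumes "finite D"
  shows "sorted_list_of_set ((\<lambda>x. x + m) ` D) = map (\<lambda>x. x + m) (sorted_list_of_set D)"
proof -
  have "sorted_wrt (<) (map (\<lambda>x. x + m) xs) \<longleftrightarrow> sorted_wrt (<) xs" for xs :: "nat list"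
    by (induction xs) auto
  with assms show ?thesis
    by (intro strict_sorted_equal) auto
qed

context
  fixes D1 D2 :: "nat set" and m n :: nat
  assumes D1: "D1 \<subseteq> {1..<m}" and D2: "D2 \<subseteq> {1..<n}"
begin

private lemma finite_parts: "finite D1" "finite D2"
  using D1 D2 by (auto intro: finite_subset)

private lemma sorted_list_of_set_union_shift:
  "sorted_list_of_set (A \<union> (\<lambda>x. x + m) ` D2)
    = sorted_list_of_set A @ map (\<lambda>x. x + m) (sorted_list_of_set D2)"
  if "finite A" "\<forall>a\<in>A. a \<le> m"
  using that D2 finite_parts
  by (subst sorted_list_of_set_append) (force simp: sorted_list_of_set_image_add)+

lemma comp_union_shift_append:
  "comp (m + n) (D1 \<union> {m} \<union> (\<lambda>x. x + m) ` D2) = comp m D1 @ comp n D2"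
proof -
  have "sorted_list_of_set (D1 \<union> {m}) = sorted_list_of_set D1 @ [m]"
    using D1 finite_parts by (subst sorted_list_of_set_append) auto
  then have sorted: "sorted_list_of_set (D1 \<union> {m} \<union> (\<lambda>x. x + m) ` D2)
      = sorted_list_of_set D1 @ m # map (\<lambda>x. x + m) (sorted_list_of_set D2)"
    using D1 finite_parts by (subst sorted_list_of_set_union_shift) auto
  show ?thesis
    unfolding comp_eq_gaps sorted gaps_append using gaps_shift[of 0 m _ n] by (simp add: add.commute)
qed

lemma comp_union_shift_near_concat:
  "comp (m + n) (D1 \<union> (\<lambda>x. x + m) ` D2) = near_concat (comp m D1) (comp n D2)"
proof -
  have sorted: "sorted_list_of_set (D1 \<union> (\<lambda>x. x + m) ` D2)
      = sorted_list_of_set D1 @ map (\<lambda>x. x + m) (sorted_list_of_set D2)"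
    using D1 finite_parts by (intro sorted_list_of_set_union_shift) auto
  have "\<forall>x\<in>set (sorted_list_of_set D1). x \<le> m"
    using D1 finite_parts by auto
  then have "gaps 0 (sorted_list_of_set D1 @ map (\<lambda>x. x + m) (sorted_list_of_set D2)) (m + n)
      = near_concat (gaps 0 (sorted_list_of_set D1) m)
          (gaps m (map (\<lambda>x. x + m) (sorted_list_of_set D2)) (m + n))"
    by (intro gaps_append_near_concat) auto
  then show ?thesis
    unfolding comp_eq_gaps sorted using gaps_shift[of 0 m _ n] by (simp add: add.commute)
qed

end

section \<open>The lsd terms of a product in MPR\<close>

lemma lsd_Nil: "lsd []"
  by (simp add: lsd_def perm_word_def)

lemma psi_word_not_lsd: "\<not> lsd p \<Longrightarrow> psi_word p = (\<lambda>w. 0)"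
  using lsd_Nil by (auto simp: psi_word_def)

lemma psi_word_lsd_perm:
  assumes "0 < N" "D \<subseteq> {1..<N}"
  shows "psi_word (lsd_perm N D) = R (comp N D)"
proof -
  have "lsd_perm N D \<noteq> []"
    using assms(1) by (simp flip: length_greater_0_conv)
  then show ?thesis
    using assms(2) lsd_lsd_perm[of N D] by (simp add: psi_word_def desc_lsd_perm)
qed

lemma psi_word_upt: "psi_word [1..<n + 1] = S n"
proof (cases "n = 0")
  case False
  have sorted: "sorted_wrt (<) [1..<n + 1]"
    by (rule sorted_wrt_upt)
  have "perm_word [1..<n + 1]"
    by (simp add: perm_word_def atLeastLessThanSuc_atLeastAtMost del: upt_Suc)
  then have "lsd [1..<n + 1]"
    using sorted by (intro ascent_separated_imp_lsd sorted_ascent_separated)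
  moreover have "comp n {} = [n]"
    by (simp add: comp_eq_gaps)
  ultimately show ?thesis
    using False desc_sorted[OF sorted] by (simp add: psi_word_def R_single del: upt_Suc)
qed (simp add: psi_word_def)

lemma lsd_st_take:
  assumes "lsd p"
  shows "lsd (st (take m p))"
proof -
  have "distinct p" "ascent_separated p"
    using assms unfolding lsd_iff_ascent_separated perm_word_def by blast+
  then have "distinct (take m p)" "ascent_separated (take m p)"
    by (simp_all add: ascent_separated_take)
  then show ?thesis
    by (simp add: lsd_iff_ascent_separated ascent_separated_st perm_word_st)
qed

lemma lsd_st_drop:
  assumes "lsd p"
  shows "lsd (st (drop m p))"
proof -
  have "distinct p" "ascent_separated p"
    using assms unfolding lsd_iff_ascent_separated perm_word_def by blast+
  then have "distinct (drop m p)" "ascent_separated (drop m p)"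
    by (simp_all add: ascent_separated_drop)
  then show ?thesis
    by (simp add: lsd_iff_ascent_separated ascent_separated_st perm_word_st)
qed

text \<open>The terms of the product m'(s \<otimes> t), each occurring with coefficient one.\<close>

definition convolution :: "nat list \<Rightarrow> nat list \<Rightarrow> nat list set" where
  "convolution s t = {p. perm_word p \<and> length p = length s + length t
      \<and> st (take (length s) p) = s \<and> st (drop (length s) p) = t}"

lemma finite_perm_words: "finite {p. perm_word p \<and> length p = n}"
proof -
  have "{p. perm_word p \<and> length p = n} \<subseteq> {p. set p \<subseteq> {1..n} \<and> length p = n}"
    unfolding perm_word_def by blast
  then show ?thesis
    by (rule finite_subset) (simp add: finite_lists_length_eq)
qed

lemma finite_convolution: "finite (convolution s t)"
proof -
  have "convolution s t \<subseteq> {p. perm_word p \<and> length p = length s + length t}"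
    unfolding convolution_def by blast
  then show ?thesis
    by (rule finite_subset) (rule finite_perm_words)
qed

lemma convolution_Nil_left: "perm_word t \<Longrightarrow> convolution [] t = {t}"
  by (auto simp: convolution_def st_perm_word)

lemma convolution_Nil_right: "perm_word s \<Longrightarrow> convolution s [] = {s}"
  by (auto simp: convolution_def st_perm_word)

lemma lsd_factors_of_convolution:
  assumes "p \<in> convolution s t" "lsd p"
  shows "lsd s" "lsd t"
proof -
  have "st (take (length s) p) = s" "st (drop (length s) p) = t"
    using assms(1) by (simp_all add: convolution_def)
  then show "lsd s" "lsd t"
    using lsd_st_take[OF assms(2)] lsd_st_drop[OF assms(2)] by metis+
qed

lemma desc_convolution:
  assumes "p \<in> convolution s t"
  shows "desc p - {length s} = desc s \<union> (\<lambda>x. x + length s) ` desc t"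
proof -
  let ?m = "length s"
  have "st (take ?m p) = s" "st (drop ?m p) = t"
    using assms by (simp_all add: convolution_def)
  then have s: "desc s = {i \<in> desc p. i < ?m}" and t: "desc t = {i. 1 \<le> i \<and> i + ?m \<in> desc p}"
    by (metis desc_st desc_take, metis desc_st desc_drop)
  have "{i \<in> desc p. ?m < i} = (\<lambda>x. x + ?m) ` desc t"
  proof
    show "{i \<in> desc p. ?m < i} \<subseteq> (\<lambda>x. x + ?m) ` desc t"
    proof
      fix i assume "i \<in> {i \<in> desc p. ?m < i}"
      then have "i - ?m \<in> desc t" "i = i - ?m + ?m"
        unfolding t by auto
      then show "i \<in> (\<lambda>x. x + ?m) ` desc t"
        by (metis image_eqI)
    qed
  qed (auto simp: t)
  moreover have "desc p - {?m} = {i \<in> desc p. i < ?m} \<union> {i \<in> desc p. ?m < i}"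
    by auto
  ultimately show ?thesis
    unfolding s by simp
qed

lemma lsd_perm_mem_convolution:
  assumes "lsd s" "lsd t" and D: "D \<subseteq> {1..<length s + length t}"
    and "{i \<in> D. i < length s} = desc s" "{i. 1 \<le> i \<and> i + length s \<in> D} = desc t"
  shows "lsd_perm (length s + length t) D \<in> convolution s t"
proof -
  let ?m = "length s" and ?c = "lsd_perm (length s + length t) D"
  have c: "lsd ?c" "desc ?c = D"
    using lsd_lsd_perm desc_lsd_perm[OF D] by auto
  have "lsd (st (take ?m ?c))" "desc (st (take ?m ?c)) = desc s" "length (st (take ?m ?c)) = ?m"
    using c assms(4) lsd_st_take by (auto simp: desc_st desc_take)
  then have "st (take ?m ?c) = s"
    using assms(1) lsd_unique by blast
  moreover have "lsd (st (drop ?m ?c))" "desc (st (drop ?m ?c)) = desc t"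
    "length (st (drop ?m ?c)) = length t"
    using c assms(5) lsd_st_drop by (auto simp: desc_st desc_drop)
  then have "st (drop ?m ?c) = t"
    using assms(2) lsd_unique by blast
  ultimately show ?thesis
    unfolding convolution_def by (simp add: perm_word_lsd_perm)
qed

lemma lsd_convolution:
  assumes "lsd s" "lsd t" "s \<noteq> []" "t \<noteq> []"
  defines "D \<equiv> desc s \<union> (\<lambda>x. x + length s) ` desc t"
  shows "{p \<in> convolution s t. lsd p}
    = {lsd_perm (length s + length t) D, lsd_perm (length s + length t) (insert (length s) D)}"
proof -
  let ?m = "length s" and ?N = "length s + length t"
  have ds: "desc s \<subseteq> {1..<?m}" and dt: "desc t \<subseteq> {1..<length t}"
    by (rule desc_subset)+
  have D_sub: "D \<subseteq> {1..<?N}" "insert ?m D \<subseteq> {1..<?N}"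
    using ds dt assms(3,4) unfolding D_def by (auto simp: Suc_le_eq)
  have shift: "i + ?m \<in> (\<lambda>x. x + ?m) ` desc t \<longleftrightarrow> i \<in> desc t" for i
    by auto
  have below: "{i \<in> E. i < ?m} = desc s" if "E = D \<or> E = insert ?m D" for E
    using that ds unfolding D_def by auto
  have above: "{i. 1 \<le> i \<and> i + ?m \<in> E} = desc t" if "E = D \<or> E = insert ?m D" for E
    using that ds dt unfolding D_def shift by auto
  have members: "lsd_perm ?N D \<in> convolution s t" "lsd_perm ?N (insert ?m D) \<in> convolution s t"
    by (rule lsd_perm_mem_convolution[OF assms(1,2) D_sub(1) below above]; simp)
      (rule lsd_perm_mem_convolution[OF assms(1,2) D_sub(2) below above]; simp)
  have "p \<in> {lsd_perm ?N D, lsd_perm ?N (insert ?m D)}" if "p \<in> convolution s t" "lsd p" for p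
  proof -
    have "desc p - {?m} = D"
      using desc_convolution[OF that(1)] unfolding D_def .
    then have "desc p = D \<or> desc p = insert ?m D"
      by blast
    moreover have "length p = ?N"
      using that(1) by (simp add: convolution_def)
    ultimately show ?thesis
      using lsd_eq_lsd_perm[OF that(2)] by auto
  qed
  then show ?thesis
    using members lsd_lsd_perm by auto
qed

lemma sum_psi_word_lsd_convolution:
  assumes "lsd s" "lsd t" "s \<noteq> []" "t \<noteq> []"
  shows "(\<lambda>w. \<Sum>p\<in>{p \<in> convolution s t. lsd p}. psi_word p w) = ns_mult (psi_word s) (psi_word t)"
proof -
  let ?m = "length s" and ?n = "length t"
  define D where "D = desc s \<union> (\<lambda>x. x + ?m) ` desc t"
  let ?\<alpha> = "comp ?m (desc s)" and ?\<beta> = "comp ?n (desc t)"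
  have ds: "desc s \<subseteq> {1..<?m}" and dt: "desc t \<subseteq> {1..<?n}"
    by (rule desc_subset)+
  have pos: "0 < ?m" "0 < ?n"
    using assms(3,4) by auto
  have D_sub: "D \<subseteq> {1..<?m + ?n}" "insert ?m D \<subseteq> {1..<?m + ?n}"
    using ds dt pos unfolding D_def by (auto simp: Suc_le_eq)
  have "?m \<notin> D"
    using ds dt unfolding D_def by auto
  then have "D \<noteq> insert ?m D"
    by blast
  then have distinct_perms: "lsd_perm (?m + ?n) D \<noteq> lsd_perm (?m + ?n) (insert ?m D)"
    using desc_lsd_perm[OF D_sub(1)] desc_lsd_perm[OF D_sub(2)] by metis
  have "(\<lambda>w. \<Sum>p\<in>{p \<in> convolution s t. lsd p}. psi_word p w)
      = psi_word (lsd_perm (?m + ?n) D) + psi_word (lsd_perm (?m + ?n) (insert ?m D))"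
    unfolding lsd_convolution[OF assms] D_def[symmetric] using distinct_perms by (simp add: fun_eq_iff)
  also have "\<dots> = R (near_concat ?\<alpha> ?\<beta>) + R (?\<alpha> @ ?\<beta>)"
  proof -
    have "insert ?m D = desc s \<union> {?m} \<union> (\<lambda>x. x + ?m) ` desc t"
      unfolding D_def by auto
    then show ?thesis
      using psi_word_lsd_perm[OF _ D_sub(1)] psi_word_lsd_perm[OF _ D_sub(2)] pos
        comp_union_shift_append[OF ds dt] comp_union_shift_near_concat[OF ds dt]
      unfolding D_def by simp
  qed
  also have "\<dots> = ns_mult (R ?\<alpha>) (R ?\<beta>)"
    using R_mult[of ?\<alpha> ?\<beta>] comp_nonempty comp_pos[OF ds] comp_pos[OF dt] pos
    by (simp add: add.commute)
  also have "\<dots> = ns_mult (psi_word s) (psi_word t)"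
    using assms by (simp add: psi_word_def)
  finally show ?thesis .
qed

lemma sum_psi_word_convolution:
  assumes "perm_word s" "perm_word t"
  shows "(\<lambda>w. \<Sum>p\<in>convolution s t. psi_word p w) = ns_mult (psi_word s) (psi_word t)"
proof (cases "s = [] \<or> t = []")
  case True
  then show ?thesis
    using assms by (auto simp: convolution_Nil_left convolution_Nil_right psi_word_def)
next
  case nonempty: False
  have "(\<Sum>p\<in>convolution s t. psi_word p w) = (\<Sum>p\<in>{p \<in> convolution s t. lsd p}. psi_word p w)" for w
    by (rule sum.mono_neutral_right) (auto simp: finite_convolution psi_word_not_lsd)
  moreover have "(\<lambda>w. \<Sum>p\<in>{p \<in> convolution s t. lsd p}. psi_word p w) = ns_mult (psi_word s) (psi_word t)"
  proof (cases "lsd s \<and> lsd t")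
    case True
    then show ?thesis
      using nonempty by (intro sum_psi_word_lsd_convolution) auto
  next
    case False
    then have none: "{p \<in> convolution s t. lsd p} = {}"
      using lsd_factors_of_convolution by blast
    have "ns_mult (psi_word s) (psi_word t) = (\<lambda>w. 0)"
      using False psi_word_not_lsd by auto
    then show ?thesis
      unfolding none by simp
  qed
  ultimately show ?thesis
    by simp
qed

section \<open>Multiplicativity of psi\<close>

definition nonzeros :: "(nat list \<Rightarrow> int) \<Rightarrow> nat list set" where
  "nonzeros F = {w. F w \<noteq> 0}"

lemma finite_nonzeros_MPR: "F \<in> MPR \<Longrightarrow> finite (nonzeros F)"
  by (simp add: MPR_def nonzeros_def)

lemma perm_word_nonzeros_MPR: "F \<in> MPR \<Longrightarrow> s \<in> nonzeros F \<Longrightarrow> perm_word s"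
  by (simp add: MPR_def nonzeros_def)

lemma finite_nonzeros_scale: "finite (nonzeros H) \<Longrightarrow> finite (nonzeros (\<lambda>w. c * H w))"
  by (rule finite_subset[rotated]) (auto simp: nonzeros_def)

lemma finite_nonzeros_sum:
  assumes "finite T" "\<And>t. t \<in> T \<Longrightarrow> finite (nonzeros (H t))"
  shows "finite (nonzeros (\<lambda>w. \<Sum>t\<in>T. H t w))"
proof (rule finite_subset)
  show "nonzeros (\<lambda>w. \<Sum>t\<in>T. H t w) \<subseteq> (\<Union>t\<in>T. nonzeros (H t))"
    by (auto simp: nonzeros_def elim: sum.not_neutral_contains_not_neutral)
qed (use assms in blast)

lemma finite_nonzeros_indicator: "finite A \<Longrightarrow> finite (nonzeros (\<lambda>w. if w \<in> A then 1 else 0))"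
  by (rule finite_subset[rotated]) (auto simp: nonzeros_def)

lemma psi_eq_sum:
  "finite A \<Longrightarrow> nonzeros F \<subseteq> A \<Longrightarrow> psi F = (\<lambda>w. \<Sum>\<sigma>\<in>A. F \<sigma> * psi_word \<sigma> w)"
  unfolding psi_def nonzeros_def by (intro ext sum.mono_neutral_left) auto

lemma psi_add:
  assumes "finite (nonzeros F)" "finite (nonzeros G)"
  shows "psi (\<lambda>w. F w + G w) = (\<lambda>w. psi F w + psi G w)"
proof -
  let ?A = "nonzeros F \<union> nonzeros G"
  have "psi (\<lambda>w. F w + G w) = (\<lambda>w. \<Sum>\<sigma>\<in>?A. (F \<sigma> + G \<sigma>) * psi_word \<sigma> w)"
    using assms by (intro psi_eq_sum) (auto simp: nonzeros_def)
  also have "\<dots> = (\<lambda>w. psi F w + psi G w)"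
    using assms psi_eq_sum[of ?A F] psi_eq_sum[of ?A G]
    by (simp add: distrib_right sum.distrib)
  finally show ?thesis .
qed

lemma psi_sum:
  assumes "finite P" "\<And>x. x \<in> P \<Longrightarrow> finite (nonzeros (H x))"
  shows "psi (\<lambda>w. \<Sum>x\<in>P. H x w) = (\<lambda>w. \<Sum>x\<in>P. psi (H x) w)"
proof -
  let ?A = "\<Union>x\<in>P. nonzeros (H x)"
  have A: "finite ?A"
    using assms by blast
  have "nonzeros (\<lambda>w. \<Sum>x\<in>P. H x w) \<subseteq> ?A"
    by (auto simp: nonzeros_def elim: sum.not_neutral_contains_not_neutral)
  then have "psi (\<lambda>w. \<Sum>x\<in>P. H x w) = (\<lambda>w. \<Sum>\<sigma>\<in>?A. (\<Sum>x\<in>P. H x \<sigma>) * psi_word \<sigma> w)"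
    using A by (rule psi_eq_sum[rotated])
  also have "\<dots> = (\<lambda>w. \<Sum>x\<in>P. \<Sum>\<sigma>\<in>?A. H x \<sigma> * psi_word \<sigma> w)"
    by (simp add: sum_distrib_right sum.swap[of _ ?A])
  also have "\<dots> = (\<lambda>w. \<Sum>x\<in>P. psi (H x) w)"
  proof -
    have "psi (H x) = (\<lambda>w. \<Sum>\<sigma>\<in>?A. H x \<sigma> * psi_word \<sigma> w)" if "x \<in> P" for x
      using A that by (intro psi_eq_sum) auto
    then show ?thesis
      by simp
  qed
  finally show ?thesis .
qed

lemma psi_scale: "psi (\<lambda>w. c * F w) = (\<lambda>w. c * psi F w)"
  by (cases "c = 0") (simp_all add: psi_def sum_distrib_left mult.assoc)

lemma psi_indicator:
  "finite A \<Longrightarrow> psi (\<lambda>p. if p \<in> A then 1 else 0) = (\<lambda>w. \<Sum>p\<in>A. psi_word p w)"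
  by (subst psi_eq_sum[of A]) (auto simp: nonzeros_def)

lemma psi_mpr_basis: "psi (mpr_basis \<sigma>) = psi_word \<sigma>"
  using psi_indicator[of "{\<sigma>}"] by (simp add: mpr_basis_def)

lemma psi_mpr_one: "psi mpr_one = ns_one"
proof -
  have "mpr_one = mpr_basis []"
    by (simp add: mpr_one_def mpr_basis_def fun_eq_iff)
  then have "psi mpr_one = psi_word []"
    using psi_mpr_basis by metis
  then show ?thesis
    by (simp add: psi_word_def)
qed

lemma sum_splittings_eq_sum_convolution:
  assumes "perm_word p"
  shows "(\<Sum>k\<le>length p. F (st (take k p)) * G (st (drop k p)))
    = (\<Sum>(s, t)\<in>{(s, t) \<in> nonzeros F \<times> nonzeros G. p \<in> convolution s t}. F s * G t)"
proof -
  let ?P = "{(s, t) \<in> nonzeros F \<times> nonzeros G. p \<in> convolution s t}"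
  let ?K = "{k \<in> {..length p}. st (take k p) \<in> nonzeros F \<and> st (drop k p) \<in> nonzeros G}"
  have "(\<Sum>k\<le>length p. F (st (take k p)) * G (st (drop k p)))
      = (\<Sum>k\<in>?K. F (st (take k p)) * G (st (drop k p)))"
    by (intro sum.mono_neutral_right) (auto simp: nonzeros_def)
  also have "\<dots> = (\<Sum>(s, t)\<in>?P. F s * G t)"
  proof (rule sum.reindex_bij_witness[of _ "\<lambda>x. length (fst x)" "\<lambda>k. (st (take k p), st (drop k p))"])
    fix k assume k: "k \<in> ?K"
    then show "length (fst (st (take k p), st (drop k p))) = k"
      by simp
    show "(st (take k p), st (drop k p)) \<in> ?P"
      using k assms by (simp add: convolution_def)
  next
    fix x assume "x \<in> ?P"
    then obtain s t where x: "x = (s, t)" "p \<in> convolution s t" "s \<in> nonzeros F" "t \<in> nonzeros G"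
      by blast
    then show "(st (take (length (fst x)) p), st (drop (length (fst x)) p)) = x"
      by (simp add: convolution_def)
    show "length (fst x) \<in> ?K"
      using x by (simp add: convolution_def)
  qed simp
  finally show ?thesis .
qed

lemma mpr_mult_eq_sum_convolution:
  assumes F: "F \<in> MPR" and G: "G \<in> MPR"
  shows "mpr_mult F G = (\<lambda>p. \<Sum>s\<in>nonzeros F. \<Sum>t\<in>nonzeros G.
      F s * G t * (if p \<in> convolution s t then 1 else 0))"
proof
  fix p
  have "(\<Sum>s\<in>nonzeros F. \<Sum>t\<in>nonzeros G. F s * G t * (if p \<in> convolution s t then 1 else 0))
      = (\<Sum>(s, t)\<in>{(s, t) \<in> nonzeros F \<times> nonzeros G. p \<in> convolution s t}. F s * G t)"
    unfolding sum.cartesian_product using F G finite_nonzeros_MPR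
    by (intro sum.mono_neutral_cong_right) (auto split: if_splits)
  moreover have "p \<notin> convolution s t" if "\<not> perm_word p" for s t
    using that by (simp add: convolution_def)
  ultimately show "mpr_mult F G p = (\<Sum>s\<in>nonzeros F. \<Sum>t\<in>nonzeros G.
      F s * G t * (if p \<in> convolution s t then 1 else 0))"
    by (simp add: mpr_mult_def sum_splittings_eq_sum_convolution)
qed

lemma psi_mult:
  assumes F: "F \<in> MPR" and G: "G \<in> MPR"
  shows "psi (mpr_mult F G) = ns_mult (psi F) (psi G)"
proof -
  have fin: "finite (nonzeros F)" "finite (nonzeros G)"
    using F G finite_nonzeros_MPR by auto
  have conv: "(\<lambda>w. \<Sum>p\<in>convolution s t. psi_word p w) = ns_mult (psi_word s) (psi_word t)"
    if "s \<in> nonzeros F" "t \<in> nonzeros G" for s t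
    using that F G perm_word_nonzeros_MPR by (intro sum_psi_word_convolution) auto
  have "psi (mpr_mult F G)
      = (\<lambda>w. \<Sum>s\<in>nonzeros F. \<Sum>t\<in>nonzeros G. F s * G t * (\<Sum>p\<in>convolution s t. psi_word p w))"
    unfolding mpr_mult_eq_sum_convolution[OF F G] mult.assoc
    by (simp add: fin psi_sum psi_scale psi_indicator finite_convolution finite_nonzeros_sum
        finite_nonzeros_scale finite_nonzeros_indicator)
  also have "\<dots> = (\<lambda>w. \<Sum>s\<in>nonzeros F. \<Sum>t\<in>nonzeros G. F s * G t * ns_mult (psi_word s) (psi_word t) w)"
    using conv by (simp add: fun_eq_iff)
  also have "\<dots> = ns_mult (psi F) (psi G)"
    using fin psi_eq_sum[of "nonzeros F" F] psi_eq_sum[of "nonzeros G" G]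
    by (simp add: ns_mult_sum_left ns_mult_sum_right ns_mult_scale_left ns_mult_scale_right
        sum_distrib_left mult.assoc)
  finally show ?thesis .
qed

section \<open>psi is a left inverse of i\<close>

lemma ns_mult_indicator:
  "ns_mult (\<lambda>v. if v = x then 1 else 0) (\<lambda>v. if v = y then 1 else 0) = (\<lambda>v. if v = x @ y then 1 else 0)"
proof
  fix v :: "nat list"
  have split: "take k v = x \<and> drop k v = y \<longleftrightarrow> k = length x \<and> v = x @ y" if "k \<le> length v" for k
  proof
    assume xy: "take k v = x \<and> drop k v = y"
    then have "length x = k"
      using that by auto
    with xy show "k = length x \<and> v = x @ y"
      by (metis append_take_drop_id)
  qed simp
  have "(if take k v = x then 1 else 0) * (if drop k v = y then 1 else 0)
      = (if k = length x then (if v = x @ y then 1 else 0) else (0::int))" if "k \<le> length v" for k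
  proof -
    have "(if take k v = x then 1 else 0) * (if drop k v = y then 1 else 0)
        = (if take k v = x \<and> drop k v = y then 1 else (0::int))"
      by simp
    then show ?thesis
      unfolding split[OF that] by simp
  qed
  then have "ns_mult (\<lambda>v. if v = x then 1 else 0) (\<lambda>v. if v = y then 1 else 0) v
      = (\<Sum>k\<le>length v. if k = length x then (if v = x @ y then 1 else 0) else 0)"
    unfolding ns_mult_def by (intro sum.cong) auto
  also have "\<dots> = (if v = x @ y then 1 else 0)"
    by simp
  finally show "ns_mult (\<lambda>v. if v = x then 1 else 0) (\<lambda>v. if v = y then 1 else 0) v
      = (if v = x @ y then 1 else 0)" .
qed

primrec Z_monomial :: "nat list \<Rightarrow> nat list \<Rightarrow> int" where
  "Z_monomial [] = ns_one"
| "Z_monomial (a # w) = ns_mult (Zg a) (Z_monomial w)"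

lemma NSym_Z_monomial: "Z_monomial w \<in> NSym"
  by (induction w) auto

lemma Z_monomial_eq_indicator: "0 \<notin> set w \<Longrightarrow> Z_monomial w = (\<lambda>v. if v = w then 1 else 0)"
proof (induction w)
  case Nil
  then show ?case
    by (simp add: ns_one_def)
next
  case (Cons a w)
  then show ?case
    using ns_mult_indicator[of "[a]" w] by (simp add: Zg_def)
qed

lemma NSym_eq_sum_Z_monomial:
  assumes "f \<in> NSym"
  shows "f = (\<lambda>v. \<Sum>w\<in>nonzeros f. f w * Z_monomial w v)"
proof
  fix v
  have "(\<Sum>w\<in>nonzeros f. f w * Z_monomial w v) = (\<Sum>w\<in>nonzeros f. if v = w then f w else 0)"
    using assms by (intro sum.cong) (auto simp: NSym_def nonzeros_def Z_monomial_eq_indicator)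
  also have "\<dots> = f v"
    using assms by (simp add: NSym_def nonzeros_def)
  finally show "f v = (\<Sum>w\<in>nonzeros f. f w * Z_monomial w v)" ..
qed

text \<open>The recursion defining S n, solved for its last term Z n.\<close>

lemma Zg_eq_S_expansion:
  assumes "0 < n"
  shows "Zg n = (\<lambda>w. (-1) ^ (n + 1) * (S n w + (\<Sum>i\<in>{1..<n}. (-1) ^ i * ns_mult (S (n - i)) (Zg i) w)))"
proof
  fix w
  let ?X = "\<Sum>i\<in>{1..<n}. (-1::int) ^ i * ns_mult (S (n - i)) (Zg i) w"
  have "{1..n} = insert n {1..<n}"
    using assms by auto
  then have "S n w = - (?X + (-1) ^ n * Zg n w)"
    using assms by (subst S.simps) (simp add: add.commute)
  moreover have "(-1::int) ^ n * (-1) ^ n = 1"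
    by (simp flip: power_mult_distrib)
  ultimately show "Zg n w = (-1) ^ (n + 1) * (S n w + ?X)"
    by (simp add: algebra_simps)
qed

locale NSym_ring_endo =
  fixes \<phi> :: "(nat list \<Rightarrow> int) \<Rightarrow> nat list \<Rightarrow> int"
  assumes add: "f \<in> NSym \<Longrightarrow> g \<in> NSym \<Longrightarrow> \<phi> (\<lambda>w. f w + g w) = (\<lambda>w. \<phi> f w + \<phi> g w)"
    and mult: "f \<in> NSym \<Longrightarrow> g \<in> NSym \<Longrightarrow> \<phi> (ns_mult f g) = ns_mult (\<phi> f) (\<phi> g)"
    and one: "\<phi> ns_one = ns_one"
begin


lemma map_zero: "\<phi> (\<lambda>w. 0) = (\<lambda>w. 0)"
  using add[of "\<lambda>w. 0" "\<lambda>w. 0"] by (simp add: fun_eq_iff)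

lemma map_scale:
  assumes "f \<in> NSym"
  shows "\<phi> (\<lambda>w. c * f w) = (\<lambda>w. c * \<phi> f w)"
proof (induction c rule: int_induct[where k = 0])
  case base
  then show ?case
    using map_zero by simp
next
  case (step1 c)
  have "\<phi> (\<lambda>w. (c + 1) * f w) = \<phi> (\<lambda>w. c * f w + f w)"
    by (simp add: algebra_simps)
  also have "\<dots> = (\<lambda>w. \<phi> (\<lambda>w. c * f w) w + \<phi> f w)"
    by (rule add[OF NSym_scale[OF assms] assms])
  finally show ?case
    using step1 by (simp add: algebra_simps)
next
  case (step2 c)
  have "\<phi> (\<lambda>w. c * f w) = \<phi> (\<lambda>w. (c - 1) * f w + f w)"
    by (simp add: algebra_simps)
  also have "\<dots> = (\<lambda>w. \<phi> (\<lambda>w. (c - 1) * f w) w + \<phi> f w)"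
    by (rule add[OF NSym_scale[OF assms] assms])
  finally have "\<phi> (\<lambda>w. (c - 1) * f w) = (\<lambda>w. \<phi> (\<lambda>w. c * f w) w - \<phi> f w)"
    by (simp add: fun_eq_iff)
  then show ?case
    using step2 by (simp add: algebra_simps)
qed

lemma map_sum:
  "finite A \<Longrightarrow> (\<And>a. a \<in> A \<Longrightarrow> f a \<in> NSym) \<Longrightarrow> \<phi> (\<lambda>w. \<Sum>a\<in>A. f a w) = (\<lambda>w. \<Sum>a\<in>A. \<phi> (f a) w)"
proof (induction A rule: finite_induct)
  case (insert x F)
  then show ?case
    by (simp add: add NSym_sum)
qed (simp add: map_zero)

context
  assumes fixes_S: "\<And>n. \<phi> (S n) = S n"
begin


lemma fixes_Zg: "\<phi> (Zg n) = Zg n"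
proof (induction n rule: less_induct)
  case (less n)
  show ?case
  proof (cases "n = 0")
    case True
    then show ?thesis
      using one by (simp add: Zg_def)
  next
    case False
    define X where "X = (\<lambda>w. \<Sum>i\<in>{1..<n}. (-1) ^ i * ns_mult (S (n - i)) (Zg i) w)"
    have X: "X \<in> NSym"
      unfolding X_def by (intro NSym_sum NSym_scale NSym_mult) auto
    have "\<phi> (\<lambda>w. (-1) ^ i * ns_mult (S (n - i)) (Zg i) w) = (\<lambda>w. (-1) ^ i * ns_mult (S (n - i)) (Zg i) w)"
      if "i \<in> {1..<n}" for i
      using that less.IH[of i] by (simp add: map_scale mult fixes_S NSym_mult NSym_S NSym_Zg)
    then have "\<phi> X = X"
      unfolding X_def by (simp add: map_sum NSym_scale NSym_mult NSym_S NSym_Zg)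
    then have sum_fixed: "\<phi> (\<lambda>w. S n w + X w) = (\<lambda>w. S n w + X w)"
      using add[OF NSym_S X] fixes_S by simp
    have Zg_n: "Zg n = (\<lambda>w. (-1) ^ (n + 1) * (S n w + X w))"
      unfolding X_def using False by (intro Zg_eq_S_expansion) simp
    have "\<phi> (\<lambda>w. (-1) ^ (n + 1) * (S n w + X w)) = (\<lambda>w. (-1) ^ (n + 1) * \<phi> (\<lambda>w. S n w + X w) w)"
      by (rule map_scale) (rule NSym_add[OF NSym_S X])
    then show ?thesis
      unfolding Zg_n sum_fixed .
  qed
qed

lemma fixes_Z_monomial: "\<phi> (Z_monomial w) = Z_monomial w"
  by (induction w) (simp_all add: one mult fixes_Zg NSym_Zg NSym_Z_monomial)

lemma fixes_NSym:
  assumes f: "f \<in> NSym"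
  shows "\<phi> f = f"
proof -
  have "finite (nonzeros f)"
    using f by (simp add: NSym_def nonzeros_def)
  then have "\<phi> (\<lambda>v. \<Sum>w\<in>nonzeros f. f w * Z_monomial w v) = (\<lambda>v. \<Sum>w\<in>nonzeros f. f w * Z_monomial w v)"
    by (simp add: map_sum map_scale fixes_Z_monomial NSym_Z_monomial NSym_scale)
  then show ?thesis
    using NSym_eq_sum_Z_monomial[OF f] by simp
qed

end

end

lemma psi_retraction:
  assumes "\<forall>f\<in>NSym. i f \<in> MPR" "i ns_one = mpr_one"
    and "\<forall>f\<in>NSym. \<forall>g\<in>NSym. i (\<lambda>w. f w + g w) = (\<lambda>w. i f w + i g w)"
    and "\<forall>f\<in>NSym. \<forall>g\<in>NSym. i (ns_mult f g) = mpr_mult (i f) (i g)"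
    and "\<forall>n. i (S n) = mpr_basis [1..<n + 1]"
    and "f \<in> NSym"
  shows "psi (i f) = f"
proof -
  interpret NSym_ring_endo "\<lambda>f. psi (i f)"
  proof
    fix f g assume fg: "f \<in> NSym" "g \<in> NSym"
    then show "psi (i (\<lambda>w. f w + g w)) = (\<lambda>w. psi (i f) w + psi (i g) w)"
      using assms(1,3) by (simp add: psi_add finite_nonzeros_MPR)
    show "psi (i (ns_mult f g)) = ns_mult (psi (i f)) (psi (i g))"
      using assms(1,4) fg by (simp add: psi_mult)
  next
    show "psi (i ns_one) = ns_one"
      using assms(2) by (simp add: psi_mpr_one)
  qed
  have "psi (i (S n)) = S n" for n
    using assms(5) psi_word_upt[of n] by (simp only: psi_mpr_basis)
  then show ?thesis
    using assms(6) by (rule fixes_NSym)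
qed

theorem theorem14p2:
  shows "(\<forall>F\<in>MPR. psi F \<in> NSym)
       \<and> psi mpr_one = ns_one
       \<and> (\<forall>F\<in>MPR. \<forall>G\<in>MPR. psi (\<lambda>w. F w + G w) = (\<lambda>w. psi F w + psi G w))
       \<and> (\<forall>F\<in>MPR. \<forall>G\<in>MPR. psi (mpr_mult F G) = ns_mult (psi F) (psi G))
       \<and> (\<forall>i :: (nat list \<Rightarrow> int) \<Rightarrow> (nat list \<Rightarrow> int).
            (\<forall>f\<in>NSym. i f \<in> MPR)
          \<and> i ns_one = mpr_one
          \<and> (\<forall>f\<in>NSym. \<forall>g\<in>NSym. i (\<lambda>w. f w + g w) = (\<lambda>w. i f w + i g w))
          \<and> (\<forall>f\<in>NSym. \<forall>g\<in>NSym. i (ns_mult f g) = mpr_mult (i f) (i g))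
          \<and> (\<forall>n. i (S n) = mpr_basis [1..<n+1])
          \<longrightarrow> (\<forall>f\<in>NSym. psi (i f) = f))"
proof (intro conjI ballI allI impI)
  show "psi F \<in> NSym" for F
    by (rule NSym_psi)
  show "psi mpr_one = ns_one"
    by (rule psi_mpr_one)
  fix F G assume "F \<in> MPR" "G \<in> MPR"
  then show "psi (\<lambda>w. F w + G w) = (\<lambda>w. psi F w + psi G w)"
    by (simp add: psi_add finite_nonzeros_MPR)
  from \<open>F \<in> MPR\<close> \<open>G \<in> MPR\<close> show "psi (mpr_mult F G) = ns_mult (psi F) (psi G)"
    by (rule psi_mult)
qed (elim conjE, rule psi_retraction, assumption+)

end
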